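(* Let $G$ be a finite two-player zero-sum extensive form game with perfect recall, and run CFR or CFR$^+$ with alternating updates (Player 1 updated first) on $G$. Let $t\ge 0$, let $p$ be the player about to be updated at time $t$, let $\sigma^t_p$ be $p$'s current strategy, and let $\sigma_o$ be the opponent strategy used in $p$'s update values, i.e. $\sigma_o=\sigma^t_2$ if $p=1$ and $\sigma_o=\sigma^{t+1}_1$ if $p=2$. Then $$u_p^{(\sigma^{t+1}_p,\sigma_o)}\ge u_p^{(\sigma^t_p,\sigma_o)}.$$
   Context: Extensive form game: a finite tree of histories $h$ (sequences of actions from the root $\emptyset$), terminal histories $Z$, actions $A(h)$ at nonterminal $h$, an acting player $P(h)\in\{1,2,c\}$ where $c$ is chance acting with fixed probabilities, utilities $u_1(z)=-u_2(z)$ at terminals, and for each player a partition of that player's histories into information sets $I$ (all $h\in I$ share the same legal actions $A(I)$). Perfect recall: any two histories in one information set of player $p$ pass through the same sequence of player-$p$ information sets and player-$p$ actions. A strategy $\sigma_p$ gives a distribution $\boldsymbol{\sigma}_p(I)$ over $A(I)$ for each player-$p$ information set; $u^{\boldsymbol\sigma}_p$ is player $p$'s expected utility under profile $\boldsymbol\sigma$. For a profile $\boldsymbol{\sigma}$ and terminal $z$, $\pi^{\boldsymbol\sigma}_{-p}(z)$ is the product of the probabilities of all actions on the path to $z$ taken by chance and by $p$'s opponent; for $h\sqsubseteq z$, $\pi^{\boldsymbol\sigma}_p(z\mid h)$ is the product of the probabilities under $\sigma_p$ of player $p$'s actions on the path from $h$ to $z$. Counterfactual values: $v^{\boldsymbol\sigma}_p(h):=\sum_{z\in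 Z,\,h\sqsubseteq z}\pi^{\boldsymbol\sigma}_{-p}(z)\pi^{\boldsymbol\sigma}_p(z\mid h)u_p(z)$, and for an information set $I$ of player $p$, $v^{\boldsymbol\sigma}(I)_a:=\sum_{h\in I}v^{\boldsymbol\sigma}_p(ha)$, $a\in A(I)$. Let $x^+=\max(x,0)$ componentwise and $\boldsymbol{\sigma}_{\mathrm{rm}}(\boldsymbol{x}):=\boldsymbol{x}^+/(\boldsymbol{1}\cdot\boldsymbol{x}^+)$ if some $x_a>0$, else $\boldsymbol{1}/|A|$. CFR with alternating updates keeps for each information set $I$ a vector $\boldsymbol{r}^t(I)$ with $\boldsymbol{r}^0(I)=\boldsymbol 0$, plays $\boldsymbol\sigma^t(I)=\boldsymbol{\sigma}_{\mathrm{rm}}(\boldsymbol{r}^t(I))$, and updates $\boldsymbol{r}^{t+1}(I)=\boldsymbol{r}^t(I)+\boldsymbol{v}^t(I)-(\boldsymbol\sigma^t(I)\cdot\boldsymbol{v}^t(I))\boldsymbol 1$; CFR$^+$ instead keeps $\boldsymbol{q}^t(I)$ with $\boldsymbol{q}^0(I)=\boldsymbol 0$, $\boldsymbol\sigma^t(I)=\boldsymbol{\sigma}_{\mathrm{rm}}(\boldsymbol{q}^t(I))$, $\boldsymbol{q}^{t+1}(I)=(\boldsymbol{q}^t(I)+\boldsymbol{v}^t(I)-(\boldsymbol\sigma^t(I)\cdot\boldsymbol{v}^t(I))\boldsymbol 1)^+$. In both, $\boldsymbol{v}^t(I)=\boldsymbol{v}^{(\sigma^t_1,\sigma^t_2)}(I)$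 if $I$ belongs to Player 1 and $\boldsymbol{v}^t(I)=\boldsymbol{v}^{(\sigma^{t+1}_1,\sigma^t_2)}(I)$ if $I$ belongs to Player 2. *)

theory Defs
  imports Complex_Main "HOL-Library.Sublist"
begin

datatype pl = P1 | P2 | Ch

text \<open>Histories are lists of actions; util is the
utility of Player 1 at terminal histories (Player 2 gets the negative);
info assigns to each history the label of its information set; chance gives
the fixed action probabilities at chance histories.\<close>
record ('a, 'i) efg =
  hist :: "'a list set"
  player :: "'a list \<Rightarrow> pl"
  chance :: "'a list \<Rightarrow> 'a \<Rightarrow> real"
  util :: "'a list \<Rightarrow> real"
  info :: "'a list \<Rightarrow> 'i"

definition terminal :: "('a, 'i) efg \<Rightarrow> 'a list \<Rightarrow> bool" where
  "terminal G h \<longleftrightarrow> h \<in> hist G \<and> (\<forall>a. h @ [a] \<notin> hist G)"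

definition acts :: "('a, 'i) efg \<Rightarrow> 'a list \<Rightarrow> 'a set" where
  "acts G h = {a. h @ [a] \<in> hist G}"

definition iset :: "('a, 'i) efg \<Rightarrow> 'i \<Rightarrow> 'a list set" where
  "iset G I = {h \<in> hist G. \<not> terminal G h \<and> player G h \<noteq> Ch \<and> info G h = I}"

definition actsI :: "('a, 'i) efg \<Rightarrow> 'i \<Rightarrow> 'a set" where
  "actsI G I = acts G (SOME h. h \<in> iset G I)"

definition xseq :: "('a, 'i) efg \<Rightarrow> pl \<Rightarrow> 'a list \<Rightarrow> ('i \<times> 'a) list" where
  "xseq G p h = map (\<lambda>i. (info G (take i h), h ! i))
                    (filter (\<lambda>i. player G (take i h) = p) [0..<length h])"

definition wf_game :: "('a, 'i) efg \<Rightarrow> bool" where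
  "wf_game G \<longleftrightarrow>
     finite (hist G) \<and> [] \<in> hist G \<and>
     (\<forall>h a. h @ [a] \<in> hist G \<longrightarrow> h \<in> hist G) \<and>
     (\<forall>h \<in> hist G. \<not> terminal G h \<and> player G h = Ch \<longrightarrow>
         (\<forall>a \<in> acts G h. chance G h a \<ge> 0) \<and> (\<Sum>a \<in> acts G h. chance G h a) = 1) \<and>
     (\<forall>h \<in> hist G. \<forall>h' \<in> hist G.
         \<not> terminal G h \<and> \<not> terminal G h' \<and> player G h \<noteq> Ch \<and> info G h = info G h' \<longrightarrow>
           player G h' = player G h \<and> acts G h' = acts G h \<and>
           xseq G (player G h) h = xseq G (player G h) h')"

definition aprob :: "('a, 'i) efg \<Rightarrow> ('i \<Rightarrow> 'a \<Rightarrow> real) \<Rightarrow> ('i \<Rightarrow> 'a \<Rightarrow> real) \<Rightarrow> 'a list \<Rightarrow> 'a \<Rightarrow> real" where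
  "aprob G s1 s2 h a = (case player G h of Ch \<Rightarrow> chance G h a
                                        | P1 \<Rightarrow> s1 (info G h) a
                                        | P2 \<Rightarrow> s2 (info G h) a)"

definition uval :: "('a, 'i) efg \<Rightarrow> pl \<Rightarrow> 'a list \<Rightarrow> real" where
  "uval G p z = (if p = P1 then util G z else - util G z)"

definition pi_opp :: "('a, 'i) efg \<Rightarrow> ('i \<Rightarrow> 'a \<Rightarrow> real) \<Rightarrow> ('i \<Rightarrow> 'a \<Rightarrow> real) \<Rightarrow> pl \<Rightarrow> 'a list \<Rightarrow> real" where
  "pi_opp G s1 s2 p z = (\<Prod>i<length z. if player G (take i z) = p then 1
                                        else aprob G s1 s2 (take i z) (z ! i))"

definition pi_own :: "('a, 'i) efg \<Rightarrow> ('i \<Rightarrow> 'a \<Rightarrow> real) \<Rightarrow> ('i \<Rightarrow> 'a \<Rightarrow> real) \<Rightarrow> pl \<Rightarrow> 'a list \<Rightarrow> 'a list \<Rightarrow> real" where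
  "pi_own G s1 s2 p h z = (\<Prod>i\<in>{length h..<length z}. if player G (take i z) = p
                                        then aprob G s1 s2 (take i z) (z ! i) else 1)"

definition cfv :: "('a, 'i) efg \<Rightarrow> ('i \<Rightarrow> 'a \<Rightarrow> real) \<Rightarrow> ('i \<Rightarrow> 'a \<Rightarrow> real) \<Rightarrow> pl \<Rightarrow> 'a list \<Rightarrow> real" where
  "cfv G s1 s2 p h = (\<Sum>z \<in> {z. terminal G z \<and> prefix h z}.
                        pi_opp G s1 s2 p z * pi_own G s1 s2 p h z * uval G p z)"

definition cfvI :: "('a, 'i) efg \<Rightarrow> ('i \<Rightarrow> 'a \<Rightarrow> real) \<Rightarrow> ('i \<Rightarrow> 'a \<Rightarrow> real) \<Rightarrow> pl \<Rightarrow> 'i \<Rightarrow> 'a \<Rightarrow> real" where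
  "cfvI G s1 s2 p I a = (\<Sum>h \<in> iset G I. cfv G s1 s2 p (h @ [a]))"

definition eu :: "('a, 'i) efg \<Rightarrow> ('i \<Rightarrow> 'a \<Rightarrow> real) \<Rightarrow> ('i \<Rightarrow> 'a \<Rightarrow> real) \<Rightarrow> pl \<Rightarrow> real" where
  "eu G s1 s2 p = (\<Sum>z \<in> {z. terminal G z}.
                     (\<Prod>i<length z. aprob G s1 s2 (take i z) (z ! i)) * uval G p z)"

definition rm :: "'a set \<Rightarrow> ('a \<Rightarrow> real) \<Rightarrow> 'a \<Rightarrow> real" where
  "rm A x a = (if a \<in> A then
                 (if \<exists>b \<in> A. x b > 0 then max (x a) 0 / (\<Sum>b \<in> A. max (x b) 0)
                  else 1 / real (card A))
               else 0)"

definition strat :: "('a, 'i) efg \<Rightarrow> ('i \<Rightarrow> 'a \<Rightarrow> real) \<Rightarrow> 'i \<Rightarrow> 'a \<Rightarrow> real" where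
  "strat G R I = rm (actsI G I) (R I)"

text \<open>Regret update; cplus = True gives CFR+, cplus = False gives CFR.\<close>
definition upd :: "bool \<Rightarrow> 'a set \<Rightarrow> ('a \<Rightarrow> real) \<Rightarrow> ('a \<Rightarrow> real) \<Rightarrow> ('a \<Rightarrow> real) \<Rightarrow> 'a \<Rightarrow> real" where
  "upd cplus A s x v a =
     (let y = x a + v a - (\<Sum>b \<in> A. s b * v b) in if cplus then max y 0 else y)"

fun regs :: "('a, 'i) efg \<Rightarrow> bool \<Rightarrow> nat \<Rightarrow> ('i \<Rightarrow> 'a \<Rightarrow> real) \<times> ('i \<Rightarrow> 'a \<Rightarrow> real)" where
  "regs G cplus 0 = (\<lambda>I a. 0, \<lambda>I a. 0)"
| "regs G cplus (Suc t) =
     (let r1 = fst (regs G cplus t); r2 = snd (regs G cplus t);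
          s1 = strat G r1; s2 = strat G r2;
          r1' = (\<lambda>I. upd cplus (actsI G I) (s1 I) (r1 I) (cfvI G s1 s2 P1 I));
          s1' = strat G r1';
          r2' = (\<lambda>I. upd cplus (actsI G I) (s2 I) (r2 I) (cfvI G s1' s2 P2 I))
      in (r1', r2'))"

definition sigma :: "('a, 'i) efg \<Rightarrow> bool \<Rightarrow> pl \<Rightarrow> nat \<Rightarrow> 'i \<Rightarrow> 'a \<Rightarrow> real" where
  "sigma G cplus p t = strat G ((if p = P1 then fst else snd) (regs G cplus t))"

end

theory Submission
  imports Defs
begin

text \<open>
First, regret matching is greedy with respect to the values it was updated
with: if \<open>s = rm x\<close> and \<open>d = v - (s \<cdot> v)\<close> is the instantaneous regret, then
\<open>\<Sum> x\<^sup>+ d = 0\<close>, and replacing \<open>x\<close> by \<open>x + d\<close> moves every positive part in the direction of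
\<open>d\<close>, so \<open>rm (x + d) \<cdot> d \<ge> 0\<close>, i.e. \<open>rm (x + d) \<cdot> v \<ge> s \<cdot> v\<close>. Clipping at 0 (CFR+) does not
change the regret-matching strategy.
Second, a performance-difference identity: if only player \<open>p\<close> changes strategy from \<open>\<sigma>\<close> to
\<open>\<sigma>'\<close>, then \<open>u(\<sigma>') - u(\<sigma>)\<close> is the sum, over \<open>p\<close>'s histories \<open>h\<close>, of \<open>p\<close>'s reach
probability of \<open>h\<close> under \<open>\<sigma>'\<close> times the one-step gain
\<open>\<Sum>\<^sub>a \<sigma>'(h,a) v\<^sup>\<sigma>(ha) - v\<^sup>\<sigma>(h)\<close>. By perfect recall the reach probability is constant on
each information set, so the sum regroups into a nonnegative combination of the per-information
set improvements of the first fact.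
\<close>

lemma hist_prefix_closed:
  assumes wf: "wf_game G" and z: "z \<in> hist G" and "prefix y z"
  shows "y \<in> hist G"
proof -
  obtain zs where "z = y @ zs" using \<open>prefix y z\<close> by (auto simp: prefix_def)
  moreover have "y @ zs \<in> hist G \<Longrightarrow> y \<in> hist G" for zs
  proof (induction zs rule: rev_induct)
    case (snoc c zs)
    then show ?case using wf unfolding wf_game_def by (metis append_assoc)
  qed simp
  ultimately show ?thesis using z by blast
qed

lemma finite_acts:
  assumes "wf_game G"
  shows "finite (acts G h)"
proof -
  have "acts G h \<subseteq> last ` hist G" unfolding acts_def
    by (auto intro!: image_eqI[where x="h @ [_]"])
  then show ?thesis using assms finite_surj by (auto simp: wf_game_def)
qed

lemma hist_backward_induct [consumes 2, case_names step]:
  assumes wf: "wf_game G" and "h \<in> hist G"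
    and step: "\<And>h. h \<in> hist G \<Longrightarrow> (\<And>a. a \<in> acts G h \<Longrightarrow> P (h @ [a])) \<Longrightarrow> P h"
  shows "P h"
proof -
  define L where "L = Max (length ` hist G)"
  have bounded: "length h' \<le> L" if "h' \<in> hist G" for h'
    unfolding L_def using wf that by (simp add: wf_game_def)
  show ?thesis using \<open>h \<in> hist G\<close>
  proof (induction "L - length h" arbitrary: h rule: less_induct)
    case less
    show ?case
    proof (rule step[OF less.prems])
      fix a assume "a \<in> acts G h"
      then have ha: "h @ [a] \<in> hist G" by (simp add: acts_def)
      then have "L - length (h @ [a]) < L - length h" using bounded[OF ha] by simp
      then show "P (h @ [a])" using less.hyps ha by blast
    qed
  qed
qed

lemma prefix_snoc_nth:
  assumes "prefix h x" "x \<noteq> h"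
  shows "prefix (h @ [x ! length h]) x"
proof -
  obtain zs where x: "x = h @ zs" using assms by (auto simp: prefix_def)
  then obtain c zs' where "zs = c # zs'" using assms by (cases zs) auto
  then show ?thesis using x by auto
qed

lemma prefix_terminal_eq:
  assumes wf: "wf_game G" and "terminal G h" and "z \<in> hist G" and "prefix h z"
  shows "z = h"
proof (rule ccontr)
  assume "z \<noteq> h"
  then have "prefix (h @ [z ! length h]) z" using prefix_snoc_nth \<open>prefix h z\<close> by blast
  then have "h @ [z ! length h] \<in> hist G" using hist_prefix_closed[OF wf \<open>z \<in> hist G\<close>] by blast
  then show False using \<open>terminal G h\<close> by (auto simp: terminal_def)
qed

lemma sum_strict_extensions:
  assumes wf: "wf_game G" and X: "X \<subseteq> hist G"
  shows "(\<Sum>x\<in>{x\<in>X. prefix h x \<and> x \<noteq> h}. f x)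
       = (\<Sum>a\<in>acts G h. \<Sum>x\<in>{x\<in>X. prefix (h @ [a]) x}. f x)"
proof -
  let ?S = "{x\<in>X. prefix h x \<and> x \<noteq> h}"
  have "finite X" using X wf finite_subset by (auto simp: wf_game_def)
  have next_act: "(\<lambda>x. x ! length h) ` ?S \<subseteq> acts G h"
  proof
    fix a assume "a \<in> (\<lambda>x. x ! length h) ` ?S"
    then obtain x where x: "x \<in> X" "prefix h x" "x \<noteq> h" "a = x ! length h" by auto
    then have "prefix (h @ [a]) x" using prefix_snoc_nth by blast
    then show "a \<in> acts G h" using hist_prefix_closed[OF wf] x X by (auto simp: acts_def)
  qed
  have fibre: "{x \<in> ?S. x ! length h = a} = {x\<in>X. prefix (h @ [a]) x}" for a
  proof -
    have "prefix (h @ [a]) x \<Longrightarrow> prefix h x \<and> x \<noteq> h \<and> x ! length h = a" for x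
      by (auto simp: prefix_def nth_append)
    then show ?thesis using prefix_snoc_nth by blast
  qed
  have "sum f ?S = (\<Sum>a\<in>acts G h. sum f {x \<in> ?S. x ! length h = a})"
    using sum.group[OF _ finite_acts[OF wf] next_act, of f] \<open>finite X\<close> by simp
  then show ?thesis by (simp only: fibre)
qed

lemma pi_own_snoc:
  assumes "prefix (h @ [a]) z"
  shows "pi_own G s1 s2 p h z
       = (if player G h = p then aprob G s1 s2 h a else 1) * pi_own G s1 s2 p (h @ [a]) z"
proof -
  have "length h < length z" using assms prefix_length_le by fastforce
  moreover have "take (length h) z = h" "z ! length h = a" using assms
    by (auto simp: prefix_def nth_append)
  ultimately show ?thesis unfolding pi_own_def by (subst prod.atLeast_Suc_lessThan) simp_all
qed

lemma cfv_terminal: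
  assumes wf: "wf_game G" and "terminal G z"
  shows "cfv G s1 s2 p z = pi_opp G s1 s2 p z * uval G p z"
proof -
  have "{z'. terminal G z' \<and> prefix z z'} = {z}"
    using prefix_terminal_eq[OF wf \<open>terminal G z\<close>] \<open>terminal G z\<close> by (auto simp: terminal_def)
  then show ?thesis by (simp add: cfv_def pi_own_def)
qed

lemma terminal_hist: "{z. terminal G z} \<subseteq> hist G"
  by (auto simp: terminal_def)

lemma cfv_nonterminal:
  assumes wf: "wf_game G" and "\<not> terminal G h"
  shows "cfv G s1 s2 p h
       = (\<Sum>a\<in>acts G h. (if player G h = p then aprob G s1 s2 h a else 1) * cfv G s1 s2 p (h @ [a]))"
proof -
  let ?F = "\<lambda>z. pi_opp G s1 s2 p z * pi_own G s1 s2 p h z * uval G p z"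
  have "cfv G s1 s2 p h = sum ?F {z\<in>{z. terminal G z}. prefix h z \<and> z \<noteq> h}"
    unfolding cfv_def using \<open>\<not> terminal G h\<close> by (intro sum.cong) auto
  also have "\<dots> = (\<Sum>a\<in>acts G h. sum ?F {z\<in>{z. terminal G z}. prefix (h @ [a]) z})"
    by (rule sum_strict_extensions[OF wf terminal_hist])
  also have "\<dots> = (\<Sum>a\<in>acts G h. (if player G h = p then aprob G s1 s2 h a else 1) * cfv G s1 s2 p (h @ [a]))"
    unfolding cfv_def sum_distrib_left by (intro sum.cong) (auto simp: pi_own_snoc mult_ac)
  finally show ?thesis .
qed

lemma eu_eq_cfv_Nil: "eu G s1 s2 p = cfv G s1 s2 p []"
  unfolding eu_def cfv_def pi_opp_def pi_own_def
  by (intro sum.cong) (auto simp: atLeast0LessThan prod.distrib[symmetric] intro!: prod.cong)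

lemma pi_opp_cong:
  assumes "\<And>h a. player G h \<noteq> p \<Longrightarrow> aprob G s1 s2 h a = aprob G s1' s2' h a"
  shows "pi_opp G s1 s2 p z = pi_opp G s1' s2' p z"
  unfolding pi_opp_def using assms by (intro prod.cong) auto

definition strat_of :: "pl \<Rightarrow> ('i \<Rightarrow> 'a \<Rightarrow> real) \<Rightarrow> ('i \<Rightarrow> 'a \<Rightarrow> real) \<Rightarrow> 'i \<Rightarrow> 'a \<Rightarrow> real" where
  "strat_of p s1 s2 = (if p = P1 then s1 else s2)"

lemma aprob_strat_of:
  "player G h = p \<Longrightarrow> p \<noteq> Ch \<Longrightarrow> aprob G s1 s2 h a = strat_of p s1 s2 (info G h) a"
  by (cases p) (auto simp: aprob_def strat_of_def)

lemma pi_own_nonneg: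
  assumes "p \<noteq> Ch" and "\<And>I a. strat_of p s1 s2 I a \<ge> 0"
  shows "pi_own G s1 s2 p h z \<ge> 0"
  unfolding pi_own_def using assms by (intro prod_nonneg) (simp add: aprob_strat_of)

definition player_hists :: "('a, 'i) efg \<Rightarrow> pl \<Rightarrow> 'a list set" where
  "player_hists G p = {h \<in> hist G. \<not> terminal G h \<and> player G h = p}"

definition dev_gain :: "('a, 'i) efg \<Rightarrow> ('i \<Rightarrow> 'a \<Rightarrow> real) \<Rightarrow> ('i \<Rightarrow> 'a \<Rightarrow> real)
    \<Rightarrow> ('i \<Rightarrow> 'a \<Rightarrow> real) \<Rightarrow> ('i \<Rightarrow> 'a \<Rightarrow> real) \<Rightarrow> pl \<Rightarrow> 'a list \<Rightarrow> real" where
  "dev_gain G s1 s2 s1' s2' p h =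
     (\<Sum>a\<in>acts G h. aprob G s1' s2' h a * cfv G s1 s2 p (h @ [a])) - cfv G s1 s2 p h"

lemma cfv_diff_nonterminal:
  assumes wf: "wf_game G" and nt: "\<not> terminal G h"
  shows "cfv G s1' s2' p h - cfv G s1 s2 p h
       = (\<Sum>a\<in>acts G h. (if player G h = p then aprob G s1' s2' h a else 1)
            * (cfv G s1' s2' p (h @ [a]) - cfv G s1 s2 p (h @ [a])))
         + (if player G h = p then dev_gain G s1 s2 s1' s2' p h else 0)"
  using cfv_nonterminal[OF wf nt, of s1 s2 p] cfv_nonterminal[OF wf nt, of s1' s2' p]
  by (cases "player G h = p") (simp_all add: dev_gain_def right_diff_distrib sum_subtractf)

lemma cfv_diff_eq_sum_dev_gain:
  assumes wf: "wf_game G" and "h \<in> hist G"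
    and agree: "\<And>h a. player G h \<noteq> p \<Longrightarrow> aprob G s1 s2 h a = aprob G s1' s2' h a"
  shows "cfv G s1' s2' p h - cfv G s1 s2 p h
       = (\<Sum>h'\<in>{h'\<in>player_hists G p. prefix h h'}. pi_own G s1' s2' p h h' * dev_gain G s1 s2 s1' s2' p h')"
  using wf \<open>h \<in> hist G\<close>
proof (induction h rule: hist_backward_induct)
  case (step h)
  let ?f = "\<lambda>h'. pi_own G s1' s2' p h h' * dev_gain G s1 s2 s1' s2' p h'"
  let ?strict = "{h'\<in>player_hists G p. prefix h h' \<and> h' \<noteq> h}"
  show ?case
  proof (cases "terminal G h")
    case True
    then have below: "{h'\<in>player_hists G p. prefix h h'} = {}"
      using prefix_terminal_eq[OF wf True] by (auto simp: player_hists_def)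
    have "pi_opp G s1' s2' p h = pi_opp G s1 s2 p h"
      by (rule pi_opp_cong) (simp add: agree)
    then show ?thesis unfolding below by (simp add: cfv_terminal[OF wf True])
  next
    case False
    let ?w = "\<lambda>a. if player G h = p then aprob G s1' s2' h a else 1"
    let ?diff = "\<lambda>x. cfv G s1' s2' p x - cfv G s1 s2 p x"
    let ?gain = "if player G h = p then dev_gain G s1 s2 s1' s2' p h else 0"
    have "?diff h = (\<Sum>a\<in>acts G h. ?w a * ?diff (h @ [a])) + ?gain"
      by (rule cfv_diff_nonterminal[OF wf False])
    also have "(\<Sum>a\<in>acts G h. ?w a * ?diff (h @ [a]))
        = (\<Sum>a\<in>acts G h. \<Sum>h'\<in>{h'\<in>player_hists G p. prefix (h @ [a]) h'}. ?f h')"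
    proof (intro sum.cong refl)
      fix a assume "a \<in> acts G h"
      then show "?w a * ?diff (h @ [a]) = (\<Sum>h'\<in>{h'\<in>player_hists G p. prefix (h @ [a]) h'}. ?f h')"
        unfolding step.IH[OF \<open>a \<in> acts G h\<close>] sum_distrib_left
        by (intro sum.cong refl) (simp add: pi_own_snoc[of h a])
    qed
    also have "\<dots> = sum ?f ?strict"
      by (rule sum_strict_extensions[OF wf, symmetric]) (auto simp: player_hists_def)
    finally have "?diff h = sum ?f ?strict + ?gain" .
    moreover have "finite ?strict"
      using wf by (auto simp: wf_game_def player_hists_def)
    moreover have "{h'\<in>player_hists G p. prefix h h'}
        = (if player G h = p then insert h ?strict else ?strict)"
      using step.hyps False by (auto simp: player_hists_def)
    ultimately show ?thesis by (cases "player G h = p") (simp_all add: pi_own_def)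
  qed
qed

lemma iset_perfect_recall:
  assumes "wf_game G" and "h \<in> iset G I" and "h' \<in> iset G I"
  shows "player G h' = player G h \<and> acts G h' = acts G h
         \<and> xseq G (player G h) h = xseq G (player G h) h'"
proof -
  have recall: "\<forall>h \<in> hist G. \<forall>h' \<in> hist G.
         \<not> terminal G h \<and> \<not> terminal G h' \<and> player G h \<noteq> Ch \<and> info G h = info G h' \<longrightarrow>
           player G h' = player G h \<and> acts G h' = acts G h \<and>
           xseq G (player G h) h = xseq G (player G h) h'"
    using assms(1) unfolding wf_game_def by (elim conjE)
  show ?thesis using recall assms(2,3) unfolding iset_def by simp
qed

lemma acts_iset:
  assumes wf: "wf_game G" and h: "h \<in> iset G I"
  shows "acts G h = actsI G I"
  using iset_perfect_recall[OF wf someI[of "\<lambda>h. h \<in> iset G I", OF h] h]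
  unfolding actsI_def by simp

lemma pi_own_Nil_eq_prod_xseq:
  assumes "p \<noteq> Ch"
  shows "pi_own G s1 s2 p [] h = prod_list (map (\<lambda>(I, a). strat_of p s1 s2 I a) (xseq G p h))"
proof -
  let ?own = "\<lambda>i. player G (take i h) = p"
  let ?move = "\<lambda>i. strat_of p s1 s2 (info G (take i h)) (h ! i)"
  have "pi_own G s1 s2 p [] h = (\<Prod>i\<in>{i\<in>{0..<length h}. ?own i}. aprob G s1 s2 (take i h) (h ! i))"
    unfolding pi_own_def by (subst prod.inter_filter) auto
  also have "\<dots> = (\<Prod>i\<in>set (filter ?own [0..<length h]). ?move i)"
    using assms by (intro prod.cong) (auto simp: aprob_strat_of)
  also have "\<dots> = prod_list (map ?move (filter ?own [0..<length h]))"
    by (rule prod.distinct_set_conv_list) simp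
  finally show ?thesis by (simp add: xseq_def comp_def)
qed

lemma pi_own_Nil_iset:
  assumes wf: "wf_game G" and "p \<noteq> Ch"
    and h: "h \<in> iset G I" and h': "h' \<in> iset G I" and "player G h = p"
  shows "pi_own G s1 s2 p [] h' = pi_own G s1 s2 p [] h"
  using iset_perfect_recall[OF wf h h'] \<open>player G h = p\<close>
  by (simp add: pi_own_Nil_eq_prod_xseq[OF \<open>p \<noteq> Ch\<close>])

lemma player_hists_info_eq_iset:
  assumes wf: "wf_game G" and "p \<noteq> Ch" and h0: "h0 \<in> player_hists G p"
  shows "{h \<in> player_hists G p. info G h = info G h0} = iset G (info G h0)"
proof
  show "{h \<in> player_hists G p. info G h = info G h0} \<subseteq> iset G (info G h0)"
    using \<open>p \<noteq> Ch\<close> by (auto simp: player_hists_def iset_def)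
  show "iset G (info G h0) \<subseteq> {h \<in> player_hists G p. info G h = info G h0}"
  proof
    fix h assume h: "h \<in> iset G (info G h0)"
    have "h0 \<in> iset G (info G h0)" using h0 \<open>p \<noteq> Ch\<close> by (simp add: player_hists_def iset_def)
    then have "player G h = p" using iset_perfect_recall[OF wf _ h] h0 by (simp add: player_hists_def)
    then show "h \<in> {h \<in> player_hists G p. info G h = info G h0}" using h by (simp add: player_hists_def iset_def)
  qed
qed

lemma sum_dev_gain_iset:
  assumes wf: "wf_game G" and "p \<noteq> Ch" and h0: "h0 \<in> iset G I" and "player G h0 = p"
  shows "(\<Sum>h\<in>iset G I. dev_gain G s1 s2 s1' s2' p h)
       = (\<Sum>a\<in>actsI G I. strat_of p s1' s2' I a * cfvI G s1 s2 p I a)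
         - (\<Sum>a\<in>actsI G I. strat_of p s1 s2 I a * cfvI G s1 s2 p I a)" (is "_ = ?rhs")
proof -
  have "dev_gain G s1 s2 s1' s2' p h
      = (\<Sum>a\<in>actsI G I. strat_of p s1' s2' I a * cfv G s1 s2 p (h @ [a]))
        - (\<Sum>a\<in>actsI G I. strat_of p s1 s2 I a * cfv G s1 s2 p (h @ [a]))"
    if h: "h \<in> iset G I" for h
  proof -
    have "player G h = p" "\<not> terminal G h" "info G h = I"
      using iset_perfect_recall[OF wf h0 h] \<open>player G h0 = p\<close> h by (auto simp: iset_def)
    moreover have "aprob G s1 s2 h = strat_of p s1 s2 I" "aprob G s1' s2' h = strat_of p s1' s2' I"
      using aprob_strat_of[OF _ \<open>p \<noteq> Ch\<close>, of G h] calculation by auto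
    ultimately show ?thesis
      unfolding dev_gain_def cfv_nonterminal[OF wf \<open>\<not> terminal G h\<close>, of s1 s2 p] acts_iset[OF wf h]
      by simp
  qed
  then have "(\<Sum>h\<in>iset G I. dev_gain G s1 s2 s1' s2' p h)
      = (\<Sum>h\<in>iset G I. \<Sum>a\<in>actsI G I. strat_of p s1' s2' I a * cfv G s1 s2 p (h @ [a]))
        - (\<Sum>h\<in>iset G I. \<Sum>a\<in>actsI G I. strat_of p s1 s2 I a * cfv G s1 s2 p (h @ [a]))"
    by (simp add: sum_subtractf)
  also have "\<dots> = ?rhs"
    unfolding cfvI_def sum_distrib_left by (subst (1 2) sum.swap) (rule refl)
  finally show ?thesis .
qed

lemma eu_mono_of_local_improvement:
  assumes wf: "wf_game G" and "p \<noteq> Ch"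
    and agree: "\<And>h a. player G h \<noteq> p \<Longrightarrow> aprob G s1 s2 h a = aprob G s1' s2' h a"
    and nonneg: "\<And>I a. strat_of p s1' s2' I a \<ge> 0"
    and local: "\<And>I. (\<Sum>a\<in>actsI G I. strat_of p s1 s2 I a * cfvI G s1 s2 p I a)
                   \<le> (\<Sum>a\<in>actsI G I. strat_of p s1' s2' I a * cfvI G s1 s2 p I a)"
  shows "eu G s1 s2 p \<le> eu G s1' s2' p"
proof -
  let ?reach = "pi_own G s1' s2' p []"
  let ?gain = "dev_gain G s1 s2 s1' s2' p"
  have "finite (player_hists G p)" using wf by (auto simp: wf_game_def player_hists_def)
  have Nil_hist: "[] \<in> hist G" using wf by (simp add: wf_game_def)
  have "eu G s1' s2' p - eu G s1 s2 p = (\<Sum>h\<in>player_hists G p. ?reach h * ?gain h)"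
    using cfv_diff_eq_sum_dev_gain[OF wf Nil_hist agree] by (simp add: eu_eq_cfv_Nil)
  also have "\<dots> = (\<Sum>I\<in>info G ` player_hists G p. \<Sum>h\<in>{h \<in> player_hists G p. info G h = I}. ?reach h * ?gain h)"
    using \<open>finite (player_hists G p)\<close> by (intro sum.group[symmetric]) auto
  also have "\<dots> \<ge> 0"
  proof (rule sum_nonneg)
    fix I assume "I \<in> info G ` player_hists G p"
    then obtain h0 where h0: "h0 \<in> player_hists G p" and I: "I = info G h0" by blast
    then have "h0 \<in> iset G I" "player G h0 = p"
      using \<open>p \<noteq> Ch\<close> by (auto simp: player_hists_def iset_def)
    have "{h \<in> player_hists G p. info G h = I} = iset G I"
      using player_hists_info_eq_iset[OF wf \<open>p \<noteq> Ch\<close> h0] I by simp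
    then have "(\<Sum>h\<in>{h \<in> player_hists G p. info G h = I}. ?reach h * ?gain h)
        = ?reach h0 * (\<Sum>h\<in>iset G I. ?gain h)"
      unfolding sum_distrib_left
      by (simp add: pi_own_Nil_iset[OF wf \<open>p \<noteq> Ch\<close> \<open>h0 \<in> iset G I\<close> _ \<open>player G h0 = p\<close>])
    also have "\<dots> \<ge> 0"
      using sum_dev_gain_iset[OF wf \<open>p \<noteq> Ch\<close> \<open>h0 \<in> iset G I\<close> \<open>player G h0 = p\<close>] local[of I]
        pi_own_nonneg[OF \<open>p \<noteq> Ch\<close> nonneg]
      by simp
    finally show "0 \<le> (\<Sum>h\<in>{h \<in> player_hists G p. info G h = I}. ?reach h * ?gain h)" .
  qed
  finally show ?thesis by simp
qed

lemma rm_nonneg: "rm A x a \<ge> 0"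
  unfolding rm_def by (auto intro!: divide_nonneg_nonneg sum_nonneg)

lemma sum_max0_pos:
  fixes x :: "'a \<Rightarrow> real"
  assumes "finite A" and "b \<in> A" and "x b > 0"
  shows "(\<Sum>c\<in>A. max (x c) 0) > 0"
proof -
  have "max (x b) 0 \<le> (\<Sum>c\<in>A. max (x c) 0)"
    by (rule member_le_sum) (use assms in auto)
  then show ?thesis using assms by linarith
qed

lemma sum_max0_mult_eq_rm:
  assumes "finite A"
  shows "(\<Sum>a\<in>A. max (x a) 0 * f a) = (\<Sum>b\<in>A. max (x b) 0) * (\<Sum>a\<in>A. rm A x a * f a)"
proof (cases "\<exists>b\<in>A. x b > 0")
  case True
  then obtain b where "b \<in> A" "x b > 0" by blast
  then have "(\<Sum>b\<in>A. max (x b) 0) \<noteq> 0" using sum_max0_pos[of A b x] assms by simp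
  then show ?thesis using True by (simp add: rm_def sum_distrib_left)
next
  case False
  then have "max (x b) 0 = 0" if "b \<in> A" for b using that by auto
  then show ?thesis by (simp add: sum.neutral)
qed

lemma sum_rm:
  assumes "finite A" and "A \<noteq> {}"
  shows "(\<Sum>a\<in>A. rm A x a) = 1"
proof (cases "\<exists>b\<in>A. x b > 0")
  case True
  then obtain b where "b \<in> A" "x b > 0" by blast
  then have "(\<Sum>b\<in>A. max (x b) 0) > 0" using sum_max0_pos[of A b x] assms(1) by blast
  moreover have "(\<Sum>b\<in>A. max (x b) 0) = (\<Sum>b\<in>A. max (x b) 0) * (\<Sum>a\<in>A. rm A x a)"
    using sum_max0_mult_eq_rm[OF assms(1), of x "\<lambda>_. 1"] by simp
  ultimately show ?thesis by simp
next
  case False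
  then show ?thesis using assms by (simp add: rm_def)
qed

lemma rm_upd:
  "rm A (upd cplus A s x v) = rm A (\<lambda>a. x a + v a - (\<Sum>b\<in>A. s b * v b))"
proof -
  have pos: "(\<exists>b\<in>A. upd cplus A s x v b > 0) \<longleftrightarrow> (\<exists>b\<in>A. x b + v b - (\<Sum>b\<in>A. s b * v b) > 0)"
    by (cases cplus) (auto simp: upd_def Let_def less_max_iff_disj)
  have max0: "max (upd cplus A s x v a) 0 = max (x a + v a - (\<Sum>b\<in>A. s b * v b)) 0" for a
    by (cases cplus) (auto simp: upd_def Let_def)
  show ?thesis unfolding rm_def pos max0 ..
qed

lemma sum_rm_shift_mult_nonneg:
  assumes "finite A" and orth: "(\<Sum>a\<in>A. rm A x a * d a) = 0"
  shows "(\<Sum>a\<in>A. rm A (\<lambda>a. x a + d a) a * d a) \<ge> 0"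
proof -
  define z where "z a = x a + d a" for a
  have x_d: "(\<Sum>a\<in>A. max (x a) 0 * d a) = 0"
    using sum_max0_mult_eq_rm[OF assms(1), of x d] orth by simp
  have x_d_le_z_d: "max (x a) 0 * d a \<le> max (z a) 0 * d a" for a
    by (cases "d a \<ge> 0") (auto simp: z_def intro: mult_right_mono mult_right_mono_neg)
  have "(\<Sum>a\<in>A. rm A z a * d a) \<ge> 0"
  proof (cases "\<exists>b\<in>A. z b > 0")
    case True
    then obtain b where "b \<in> A" "z b > 0" by blast
    have "(\<Sum>a\<in>A. max (z a) 0 * d a) \<ge> 0"
      using sum_mono[of A "\<lambda>a. max (x a) 0 * d a" "\<lambda>a. max (z a) 0 * d a"] x_d_le_z_d x_d by simp
    moreover note sum_max0_mult_eq_rm[OF assms(1), of z d]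
    ultimately show ?thesis
      using sum_max0_pos[of A b z] assms(1) \<open>b \<in> A\<close> \<open>z b > 0\<close> by (simp add: zero_le_mult_iff)
  next
    case no_z_pos: False
    then have z_d: "(\<Sum>a\<in>A. max (z a) 0 * d a) = 0" by (intro sum.neutral) auto
    have no_x_pos: "\<not> (\<exists>b\<in>A. x b > 0)"
    proof
      assume "\<exists>b\<in>A. x b > 0"
      then obtain b where b: "b \<in> A" "x b > 0" ..
      have "max (z b) 0 = 0" "d b < 0" using no_z_pos b by (auto simp: z_def)
      then have "max (x b) 0 * d b < max (z b) 0 * d b" using b by (simp add: mult_pos_neg)
      then have "(\<Sum>a\<in>A. max (x a) 0 * d a) < (\<Sum>a\<in>A. max (z a) 0 * d a)"
        using x_d_le_z_d \<open>b \<in> A\<close> by (intro sum_strict_mono_ex1[OF assms(1)]) blast+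
      then show False using z_d x_d by simp
    qed
    then have "rm A z = rm A x" using no_z_pos by (auto simp: rm_def)
    then show ?thesis using orth by simp
  qed
  then show ?thesis by (simp only: z_def[abs_def])
qed

lemma rm_regret_step_improves:
  assumes "finite A"
  shows "(\<Sum>a\<in>A. rm A x a * v a)
       \<le> (\<Sum>a\<in>A. rm A (\<lambda>a. x a + v a - (\<Sum>b\<in>A. rm A x b * v b)) a * v a)"
proof (cases "A = {}")
  case False
  define c where "c = (\<Sum>b\<in>A. rm A x b * v b)"
  have shift: "(\<Sum>a\<in>A. rm A y a * (v a - c)) = (\<Sum>a\<in>A. rm A y a * v a) - c" for y
    using sum_rm[OF assms False, of y]
    by (simp add: right_diff_distrib sum_subtractf sum_distrib_right[symmetric])
  have orth: "(\<Sum>a\<in>A. rm A x a * (v a - c)) = 0" using shift[of x] by (simp add: c_def)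
  have "(\<Sum>a\<in>A. rm A (\<lambda>a. x a + (v a - c)) a * (v a - c)) \<ge> 0"
    by (rule sum_rm_shift_mult_nonneg[OF assms orth])
  then have "c \<le> (\<Sum>a\<in>A. rm A (\<lambda>a. x a + v a - c) a * v a)"
    using shift by (simp add: add_diff_eq)
  then show ?thesis unfolding c_def .
qed simp

lemma strat_regret_update_improves:
  assumes "wf_game G"
  shows "(\<Sum>a\<in>actsI G I. strat G R I a * v I a)
       \<le> (\<Sum>a\<in>actsI G I. strat G (\<lambda>J. upd cplus (actsI G J) (strat G R J) (R J) (v J)) I a * v I a)"
  using rm_regret_step_improves[OF finite_acts[OF assms], of "SOME h. h \<in> iset G I" "R I" "v I"]
  unfolding strat_def rm_upd actsI_def by simp

lemma sigma_Suc:
  "sigma G cplus P1 (Suc t) = strat G (\<lambda>I. upd cplus (actsI G I) (sigma G cplus P1 t I)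
      (fst (regs G cplus t) I) (cfvI G (sigma G cplus P1 t) (sigma G cplus P2 t) P1 I))"
  "sigma G cplus P2 (Suc t) = strat G (\<lambda>I. upd cplus (actsI G I) (sigma G cplus P2 t I)
      (snd (regs G cplus t) I) (cfvI G (sigma G cplus P1 (Suc t)) (sigma G cplus P2 t) P2 I))"
  by (simp_all add: sigma_def Let_def)

theorem theorem3:
  fixes G :: "('a, 'i) efg" and cplus :: bool and t :: nat
  assumes "wf_game G"
  shows "eu G (sigma G cplus P1 (Suc t)) (sigma G cplus P2 t) P1
           \<ge> eu G (sigma G cplus P1 t) (sigma G cplus P2 t) P1
       \<and> eu G (sigma G cplus P1 (Suc t)) (sigma G cplus P2 (Suc t)) P2
           \<ge> eu G (sigma G cplus P1 (Suc t)) (sigma G cplus P2 t) P2"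
proof
  have sigma_t: "sigma G cplus P1 t = strat G (fst (regs G cplus t))"
    "sigma G cplus P2 t = strat G (snd (regs G cplus t))"
    by (simp_all add: sigma_def)
  show "eu G (sigma G cplus P1 (Suc t)) (sigma G cplus P2 t) P1
      \<ge> eu G (sigma G cplus P1 t) (sigma G cplus P2 t) P1"
    using strat_regret_update_improves[OF assms, of "fst (regs G cplus t)"]
    by (intro eu_mono_of_local_improvement[OF assms])
      (auto simp: aprob_def strat_of_def sigma_Suc(1) sigma_t strat_def rm_nonneg split: pl.split)
  show "eu G (sigma G cplus P1 (Suc t)) (sigma G cplus P2 (Suc t)) P2
      \<ge> eu G (sigma G cplus P1 (Suc t)) (sigma G cplus P2 t) P2"
    using strat_regret_update_improves[OF assms, of "snd (regs G cplus t)"]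
    by (intro eu_mono_of_local_improvement[OF assms])
      (auto simp: aprob_def strat_of_def sigma_Suc(2) sigma_t strat_def rm_nonneg split: pl.split)
qed

end
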